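(* Let $U_5=(\mathbb{N},F_5)$ where $F_5=\{f_i:i\in\mathbb{N}\setminus\{0\}\}$ and, for $i\ge1$, $j\in\mathbb{N}$, $f_i(j)=1$ if $i=j$ and $f_i(j)=0$ if $i\ne j$. Then $\operatorname{typ}_u(Tab(U_5),h)=t_5$, where $h$ is the depth and $t_5$ is the table with rows (indexed $i,d,a$; entries in columns $i,d,a$) $(\gamma,\epsilon,\epsilon)$, $(\gamma,\gamma,\gamma)$, $(\gamma,\gamma,\gamma)$.
   Context: Let $\mathbb{N}=\{0,1,2,\dots\}$; for $k\ge 2$, $E_k=\{0,\dots,k-1\}$; $\mathcal{P}(\mathbb{N})$ is the set of nonempty finite subsets of $\mathbb{N}$. For a nonempty set $F$, a decision table $T\in\mathcal{M}_k(F)$ is a rectangular table with $n\ge1$ columns labeled with attributes $f_1,\dots,f_n\in F$ (columns with the same label are equal), whose rows are pairwise different tuples in $E_k^n$ (possibly none), each row labeled with a set from $\mathcal{P}(\mathbb{N})$; $At(T)=\{f_1,\dots,f_n\}$, $\Delta(T)$ the set of rows; for a word $\alpha=(f_{i_1},\delta_1)\cdots(f_{i_m},\delta_m)$, $T\alpha$ is the subtable of rows with value $\delta_j$ in column $f_{i_j}$ for all $j$. Information system: $U=(A,F)$ with $A$ nonempty and $F$ a nonempty set of functions $A\to E_k$ (here $k=2$). A problem over $U$ is $z=(\nu,f_1,\dots,f_n)$ with $n\ge1$, $\nu:E_k^n\to\mathcal{P}(\mathbb{N})$, $f_1,\dots,f_n\in F$. Its table $T(z)\in\mathcal{M}_k(F)$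 has columns labeled $f_1,\dots,f_n$; $\bar\delta\in E_k^n$ is a row iff there is $x\in A$ with $f_j(x)=\delta_j$ for all $j$, and it is labeled $\nu(\bar\delta)$. $Tab(U)=\{T(z): z \text{ a problem over } U\}$ (a closed class, i.e. closed under removal of columns (keeping the first of equal rows), arbitrary changing of decision sets, permutation and duplication of columns). Decision trees over $\mathcal{M}_k(F)$: finite rooted directed trees with at least two nodes; root and edges leaving the root unlabeled; worker nodes (neither root nor terminal) labeled by attributes in $F$; edges leaving worker nodes labeled by elements of $E_k$; terminal nodes labeled by numbers in $\mathbb{N}$. For a complete path $\xi$, $\pi(\xi)$ is the word of pairs (attribute of worker node, label of leaving edge) along $\xi$, $\varphi(\xi)$ the word of those attributes, $\tau(\xi)$ the terminal label. A nondeterministic decision tree for $T$ uses only attributes in $At(T)$, satisfies $\bigcup_\xi\Delta(T\pi(\xi))=\Delta(T)$, and for every row $r\in\Delta(T\pi(\xi))$, $\tau(\xi)$ lies in the decision set of $r$. It is deterministic if exactly one edge leaves the root and edges leaving each worker node have distinct labels. The depth of a word is its length $h(\alpha)=|\alpha|$; $h(\Gamma)=\max_\xi h(\varphi(\xi))$. For $T$ with columns $f_1,\dots,f_n$: $h^i(T)=n$, $h^d(T)$ and $h^a(T)$ are the minimum depths of deterministic, respectively nondeterministic, decision trees for $T$. For $b,c\in\{i,d,a\}$ and a class $\mathcal{C}$, $\mathcal{U}^{bc}_{\mathcal{C}h}(n)=\max\{h^b(T):T\in\mathcal{C},h^c(T)\le n\}$ (defined iff this set is nonempty and finite). For a partial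 $g:\mathbb{N}\to\mathbb{N}$, $\mathrm{Dom}^+(g)=\{n\in\mathrm{Dom}(g):g(n)\ge n\}$, $\mathrm{Dom}^-(g)=\{n\in\mathrm{Dom}(g):g(n)\le n\}$; $\operatorname{typ}(g)$ is $\alpha$ if $\mathrm{Dom}(g)$ is infinite and $g$ bounded above; $\beta$ if $\mathrm{Dom}(g)$ infinite, $\mathrm{Dom}^+(g)$ finite, $g$ unbounded; $\gamma$ if $\mathrm{Dom}^+(g)$ and $\mathrm{Dom}^-(g)$ are infinite; $\delta$ if $\mathrm{Dom}(g)$ infinite and $\mathrm{Dom}^-(g)$ finite; $\epsilon$ if $\mathrm{Dom}(g)$ finite. $\operatorname{typ}_u(\mathcal{C},h)$ is the $3\times3$ table (rows and columns indexed $i,d,a$) with entry $\operatorname{typ}(\mathcal{U}^{bc}_{\mathcal{C}h})$ in row $b$, column $c$. *)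

theory Defs
  imports Main
begin

(* A tree is given by the (nonempty) list of
   subtrees hanging below the unlabeled root.  A subtree is either a terminal
   node (labelled by a natural number) or a worker node labelled by an
   attribute with a nonempty list of leaving edges, each labelled by a value. *)
datatype 'f dtree = Term nat | Work 'f "(nat \<times> 'f dtree) list"

fun tpaths :: "'f dtree \<Rightarrow> (('f \<times> nat) list \<times> nat) set" where
  "tpaths (Term m) = {([], m)}"
| "tpaths (Work f cs) =
     (\<Union>dc \<in> set cs. (\<lambda>(p, m). ((f, fst dc) # p, m)) ` tpaths (snd dc))"

fun wf_node :: "nat \<Rightarrow> 'f set \<Rightarrow> 'f dtree \<Rightarrow> bool" where
  "wf_node k Fs (Term m) = True"
| "wf_node k Fs (Work f cs) =
     (cs \<noteq> [] \<and> f \<in> Fs \<and> (\<forall>dc \<in> set cs. fst dc < k \<and> wf_node k Fs (snd dc)))"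

fun det_node :: "'f dtree \<Rightarrow> bool" where
  "det_node (Term m) = True"
| "det_node (Work f cs) = (distinct (map fst cs) \<and> (\<forall>dc \<in> set cs. det_node (snd dc)))"

definition paths :: "'f dtree list \<Rightarrow> (('f \<times> nat) list \<times> nat) set" where
  "paths G = (\<Union>c \<in> set G. tpaths c)"

definition depth :: "'f dtree list \<Rightarrow> nat" where
  "depth G = Max ((\<lambda>pm. length (fst pm)) ` paths G)"

(* A problem z = (nu, f_1..f_n) is a pair
   (nu, fs) with fs the list of attributes. *)
definition rows :: "'a set \<Rightarrow> ('a \<Rightarrow> nat) list \<Rightarrow> nat list set" where
  "rows A fs = (\<lambda>x. map (\<lambda>f. f x) fs) ` A"

definition row_sat :: "('a \<Rightarrow> nat) list \<Rightarrow> nat list \<Rightarrow> (('a \<Rightarrow> nat) \<times> nat) list \<Rightarrow> bool" where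
  "row_sat fs r p = (\<forall>fd \<in> set p. \<forall>j < length fs. fs ! j = fst fd \<longrightarrow> r ! j = snd fd)"

definition subrows :: "'a set \<Rightarrow> ('a \<Rightarrow> nat) list \<Rightarrow> (('a \<Rightarrow> nat) \<times> nat) list \<Rightarrow> nat list set" where
  "subrows A fs p = {r \<in> rows A fs. row_sat fs r p}"

type_synonym 'a problem = "(nat list \<Rightarrow> nat set) \<times> ('a \<Rightarrow> nat) list"

definition is_problem :: "'a set \<Rightarrow> ('a \<Rightarrow> nat) set \<Rightarrow> nat \<Rightarrow> 'a problem \<Rightarrow> bool" where
  "is_problem A F k z =
     (snd z \<noteq> [] \<and> set (snd z) \<subseteq> F \<and>
      (\<forall>d. length d = length (snd z) \<and> set d \<subseteq> {..<k} \<longrightarrow> fst z d \<noteq> {} \<and> finite (fst z d)))"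

definition ndt :: "'a set \<Rightarrow> nat \<Rightarrow> 'a problem \<Rightarrow> ('a \<Rightarrow> nat) dtree list \<Rightarrow> bool" where
  "ndt A k z G =
     (G \<noteq> [] \<and> (\<forall>c \<in> set G. wf_node k (set (snd z)) c) \<and>
      (\<Union>pm \<in> paths G. subrows A (snd z) (fst pm)) = rows A (snd z) \<and>
      (\<forall>pm \<in> paths G. \<forall>r \<in> subrows A (snd z) (fst pm). snd pm \<in> fst z r))"

definition dt :: "'a set \<Rightarrow> nat \<Rightarrow> 'a problem \<Rightarrow> ('a \<Rightarrow> nat) dtree list \<Rightarrow> bool" where
  "dt A k z G = (ndt A k z G \<and> length G = 1 \<and> (\<forall>c \<in> set G. det_node c))"

datatype cmeasure = CI | CD | CA

definition hcomp :: "'a set \<Rightarrow> nat \<Rightarrow> cmeasure \<Rightarrow> 'a problem \<Rightarrow> nat" where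
  "hcomp A k b z = (case b of
      CI \<Rightarrow> length (snd z)
    | CD \<Rightarrow> (LEAST h. \<exists>G. dt A k z G \<and> depth G = h)
    | CA \<Rightarrow> (LEAST h. \<exists>G. ndt A k z G \<and> depth G = h))"

definition Ufun :: "'a set \<Rightarrow> ('a \<Rightarrow> nat) set \<Rightarrow> nat \<Rightarrow> cmeasure \<Rightarrow> cmeasure \<Rightarrow> nat \<Rightarrow> nat option" where
  "Ufun A F k b c n =
     (let S = {hcomp A k b z | z. is_problem A F k z \<and> hcomp A k c z \<le> n}
      in if S \<noteq> {} \<and> finite S then Some (Max S) else None)"

definition Dom :: "(nat \<Rightarrow> nat option) \<Rightarrow> nat set" where
  "Dom g = {n. g n \<noteq> None}"
definition DomP :: "(nat \<Rightarrow> nat option) \<Rightarrow> nat set" where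
  "DomP g = {n \<in> Dom g. the (g n) \<ge> n}"
definition DomM :: "(nat \<Rightarrow> nat option) \<Rightarrow> nat set" where
  "DomM g = {n \<in> Dom g. the (g n) \<le> n}"
definition bounded_above :: "(nat \<Rightarrow> nat option) \<Rightarrow> bool" where
  "bounded_above g = (\<exists>B. \<forall>n \<in> Dom g. the (g n) \<le> B)"

datatype ftype = TAlpha | TBeta | TGamma | TDelta | TEps

definition is_typ :: "(nat \<Rightarrow> nat option) \<Rightarrow> ftype \<Rightarrow> bool" where
  "is_typ g t = (case t of
      TAlpha \<Rightarrow> infinite (Dom g) \<and> bounded_above g
    | TBeta \<Rightarrow> infinite (Dom g) \<and> finite (DomP g) \<and> \<not> bounded_above g
    | TGamma \<Rightarrow> infinite (DomP g) \<and> infinite (DomM g)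
    | TDelta \<Rightarrow> infinite (Dom g) \<and> finite (DomM g)
    | TEps \<Rightarrow> finite (Dom g))"

definition typ_of :: "(nat \<Rightarrow> nat option) \<Rightarrow> ftype" where
  "typ_of g = (THE t. is_typ g t)"

definition typ_u :: "'a set \<Rightarrow> ('a \<Rightarrow> nat) set \<Rightarrow> nat \<Rightarrow> cmeasure \<Rightarrow> cmeasure \<Rightarrow> ftype" where
  "typ_u A F k b c = typ_of (Ufun A F k b c)"

definition f5 :: "nat \<Rightarrow> nat \<Rightarrow> nat" where
  "f5 i j = (if i = j then 1 else 0)"

definition F5 :: "(nat \<Rightarrow> nat) set" where
  "F5 = {f5 i | i. i \<noteq> 0}"

definition t5 :: "cmeasure \<Rightarrow> cmeasure \<Rightarrow> ftype" where
  "t5 b c = (case b of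
      CI \<Rightarrow> (case c of CI \<Rightarrow> TGamma | CD \<Rightarrow> TEps | CA \<Rightarrow> TEps)
    | CD \<Rightarrow> TGamma
    | CA \<Rightarrow> TGamma)"

end

theory Submission
  imports Defs
begin

(*
  Every attribute f_i of U_5 is the indicator of the single point i > 0, so it vanishes at 0 and
  answers 1 on exactly one object. Given any nondeterministic tree, take its path that accepts the
  row of the object 0 and query the attributes on that path one after another: an answer 1
  identifies the object, and if every answer is 0 the row is consistent with the whole path, so the
  terminal label of the path is correct. This decision list is deterministic and no deeper than the
  path, hence h^d = h^a <= h^i for every problem. Conversely, the problem over f_1, ..., f_n asking
  whether the object lies in {1, ..., n} has h^i = h^d = h^a = n: a path accepting the row of 0
  that skips f_i also accepts the row of i, which needs the other answer. With n copies of f_1 and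
  a constant decision, h^i = n while h^d = h^a = 0. Hence U^bc(n) = n for n >= 1, except for
  b = i and c <> i, where U^bc is nowhere defined.
*)

fun decision_list :: "('f \<Rightarrow> nat) \<Rightarrow> 'f list \<Rightarrow> nat \<Rightarrow> 'f dtree" where
  "decision_list lab [] t = Term t"
| "decision_list lab (q # Q) t = Work q [(0, decision_list lab Q t), (1, Term (lab q))]"

lemma tpaths_decision_list:
  "(p, m) \<in> tpaths (decision_list lab Q t) \<longleftrightarrow>
     (p = map (\<lambda>q. (q, 0)) Q \<and> m = t) \<or>
     (\<exists>as q bs. Q = as @ q # bs \<and> p = map (\<lambda>q. (q, 0)) as @ [(q, 1)] \<and> m = lab q)"
proof (induction Q arbitrary: p)
  case Nil
  then show ?case by simp
next
  case (Cons a Q)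
  have "(p, m) \<in> tpaths (decision_list lab (a # Q) t) \<longleftrightarrow>
     (\<exists>p'. p = (a, 0) # p' \<and> (p', m) \<in> tpaths (decision_list lab Q t)) \<or> (p = [(a, 1)] \<and> m = lab a)"
    by auto
  also have "\<dots> \<longleftrightarrow> (p = map (\<lambda>q. (q, 0)) (a # Q) \<and> m = t) \<or>
     (\<exists>as q bs. a # Q = as @ q # bs \<and> p = map (\<lambda>q. (q, 0)) as @ [(q, 1)] \<and> m = lab q)"
    unfolding Cons.IH Cons_eq_append_conv by fastforce
  finally show ?case .
qed

lemma paths_singleton: "paths [c] = tpaths c"
  by (simp add: paths_def)

lemma finite_tpaths: "finite (tpaths c)"
  by (induction c rule: tpaths.induct) auto

lemma finite_paths: "finite (paths G)"
  by (simp add: paths_def finite_tpaths)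

lemma length_le_depth: "(p, m) \<in> paths G \<Longrightarrow> length p \<le> depth G"
  unfolding depth_def by (rule Max_ge) (force simp: finite_paths)+

lemma depth_decision_list: "depth [decision_list lab Q t] \<le> length Q"
proof -
  have "(map (\<lambda>q. (q, 0)) Q, t) \<in> paths [decision_list lab Q t]"
    by (simp add: paths_singleton tpaths_decision_list)
  moreover have "length p \<le> length Q" if "(p, m) \<in> paths [decision_list lab Q t]" for p m
    using that by (auto simp: paths_singleton tpaths_decision_list)
  ultimately show ?thesis
    unfolding depth_def by (intro Max.boundedI) (auto simp: finite_paths)
qed

lemma row_sat_row:
  "row_sat fs (map (\<lambda>f. f x) fs) p \<longleftrightarrow> (\<forall>(f, d) \<in> set p. f \<in> set fs \<longrightarrow> f x = d)"
  unfolding row_sat_def by (force simp: in_set_conv_nth)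

lemma subrows_iff:
  "r \<in> subrows A fs p \<longleftrightarrow>
     (\<exists>x \<in> A. r = map (\<lambda>f. f x) fs \<and> (\<forall>(f, d) \<in> set p. f \<in> set fs \<longrightarrow> f x = d))"
  by (auto simp: subrows_def rows_def row_sat_row)

lemma dt_decision_list:
  assumes "2 \<le> k" and Q: "set Q \<subseteq> set fs"
    and binary: "\<And>q x. q \<in> set Q \<Longrightarrow> x \<in> A \<Longrightarrow> q x < 2"
    and lab: "\<And>q x. q \<in> set Q \<Longrightarrow> x \<in> A \<Longrightarrow> q x = 1 \<Longrightarrow> lab q \<in> nu (map (\<lambda>f. f x) fs)"
    and t: "\<And>x. x \<in> A \<Longrightarrow> \<forall>q \<in> set Q. q x = 0 \<Longrightarrow> t \<in> nu (map (\<lambda>f. f x) fs)"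
  shows "dt A k (nu, fs) [decision_list lab Q t]"
proof -
  let ?G = "[decision_list lab Q t]"
  have path_of: "\<exists>pm \<in> paths ?G. map (\<lambda>f. f x) fs \<in> subrows A fs (fst pm)"
    if "x \<in> A" for x
  proof (cases "\<exists>q \<in> set Q. q x = 1")
    case True
    then obtain as q bs where split: "Q = as @ q # bs" and "q x = 1"
      and before: "\<forall>a \<in> set as. a x \<noteq> 1"
      using split_list_first_prop[of Q "\<lambda>q. q x = 1"] by blast
    have "a x = 0" if "a \<in> set as" for a
    proof -
      have "a x < 2" "a x \<noteq> 1"
        using that split before binary[OF _ \<open>x \<in> A\<close>] by auto
      then show ?thesis
        by simp
    qed
    then show ?thesis
      using split \<open>q x = 1\<close>
      by (intro bexI[of _ "(map (\<lambda>q. (q, 0)) as @ [(q, 1)], lab q)"])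
         (auto simp: paths_singleton tpaths_decision_list subrows_iff that)
  next
    case False
    then have "\<forall>q \<in> set Q. q x = 0"
      using binary[OF _ that] by (force simp: less_2_cases_iff)
    then show ?thesis
      by (intro bexI[of _ "(map (\<lambda>q. (q, 0)) Q, t)"])
         (auto simp: paths_singleton tpaths_decision_list subrows_iff that)
  qed
  have label: "m \<in> nu (map (\<lambda>f. f x) fs)"
    if "(p, m) \<in> paths ?G" "x \<in> A" "\<forall>(f, d) \<in> set p. f \<in> set fs \<longrightarrow> f x = d" for p m x
    using that Q lab t by (fastforce simp: paths_singleton tpaths_decision_list)
  have "wf_node k (set fs) (decision_list lab Q t)" "det_node (decision_list lab Q t)"
    using Q \<open>2 \<le> k\<close> by (induction Q) auto
  moreover have "(\<Union>pm \<in> paths ?G. subrows A fs (fst pm)) = rows A fs"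
    using path_of by (auto simp: subrows_def rows_def)
  ultimately show ?thesis
    unfolding dt_def ndt_def using label by (fastforce simp: subrows_iff)
qed

lemma is_problem_attributes: "is_problem A F k (nu, fs) \<Longrightarrow> set fs \<subseteq> F"
  by (simp add: is_problem_def)

lemma hcomp_CD_le_depth: "dt A k z G \<Longrightarrow> hcomp A k CD z \<le> depth G"
  unfolding hcomp_def by (auto intro: Least_le)

lemma hcomp_CA_le_depth: "ndt A k z G \<Longrightarrow> hcomp A k CA z \<le> depth G"
  unfolding hcomp_def by (auto intro: Least_le)

lemma ndt_optimal_exists:
  assumes "ndt A k z G"
  obtains G' where "ndt A k z G'" "depth G' = hcomp A k CA z"
  using LeastI_ex[of "\<lambda>h. \<exists>G. ndt A k z G \<and> depth G = h"] assms
  unfolding hcomp_def by auto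

lemma hcomp_CA_le_CD:
  assumes "dt A k z G"
  shows "hcomp A k CA z \<le> hcomp A k CD z"
proof -
  obtain G' where "dt A k z G'" "depth G' = hcomp A k CD z"
    using LeastI_ex[of "\<lambda>h. \<exists>G. dt A k z G \<and> depth G = h"] assms
    unfolding hcomp_def by auto
  then show ?thesis
    using hcomp_CA_le_depth unfolding dt_def by metis
qed

lemma ndt_path_through_row:
  assumes "ndt A k (nu, fs) G" "x \<in> A"
  obtains p t where "(p, t) \<in> paths G" "\<forall>(f, d) \<in> set p. f \<in> set fs \<longrightarrow> f x = d"
    "\<And>y. y \<in> A \<Longrightarrow> \<forall>(f, d) \<in> set p. f \<in> set fs \<longrightarrow> f y = d \<Longrightarrow> t \<in> nu (map (\<lambda>f. f y) fs)"
proof -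
  have "map (\<lambda>f. f x) fs \<in> (\<Union>pm \<in> paths G. subrows A fs (fst pm))"
    using assms by (auto simp: ndt_def rows_def)
  then obtain p t where path: "(p, t) \<in> paths G" and "map (\<lambda>f. f x) fs \<in> subrows A fs p"
    by auto
  then have "\<forall>(f, d) \<in> set p. f \<in> set fs \<longrightarrow> f x = d"
    by (simp add: subrows_def row_sat_row)
  moreover have "t \<in> nu (map (\<lambda>f. f y) fs)"
    if "y \<in> A" "\<forall>(f, d) \<in> set p. f \<in> set fs \<longrightarrow> f y = d" for y
  proof -
    have "map (\<lambda>f. f y) fs \<in> subrows A fs p"
      using that by (auto simp: subrows_iff)
    then show ?thesis
      using assms(1) path by (force simp: ndt_def)
  qed
  ultimately show ?thesis
    using that path by blast
qed

lemma typ_of_eq_TGamma: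
  assumes "infinite {n. g n = Some n}"
  shows "typ_of g = TGamma"
proof -
  have "{n. g n = Some n} \<subseteq> Dom g" "{n. g n = Some n} \<subseteq> DomP g" "{n. g n = Some n} \<subseteq> DomM g"
    by (auto simp: Dom_def DomP_def DomM_def)
  then have inf: "infinite (Dom g)" "infinite (DomP g)" "infinite (DomM g)"
    using assms finite_subset by blast+
  have "\<not> bounded_above g"
  proof
    assume "bounded_above g"
    then obtain B where "\<forall>n \<in> Dom g. the (g n) \<le> B"
      by (auto simp: bounded_above_def)
    moreover obtain n where "g n = Some n" "B < n"
      using assms unfolding finite_nat_set_iff_bounded_le by (auto simp: not_le)
    ultimately show False
      by (force simp: Dom_def)
  qed
  then have "is_typ g = (\<lambda>t. t = TGamma)"
    using inf by (intro ext, case_tac t) (auto simp: is_typ_def)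
  then show ?thesis
    unfolding typ_of_def by simp
qed

lemma typ_of_const_None: "typ_of (\<lambda>_. None) = TEps"
proof -
  have "is_typ (\<lambda>_. None) = (\<lambda>t. t = TEps)"
    by (intro ext, case_tac t) (auto simp: is_typ_def Dom_def DomP_def DomM_def)
  then show ?thesis
    unfolding typ_of_def by simp
qed

lemma Ufun_eq_Some:
  assumes "\<And>z. is_problem A F k z \<Longrightarrow> hcomp A k b z \<le> hcomp A k c z"
    and "is_problem A F k z" "hcomp A k b z = n" "hcomp A k c z = n"
  shows "Ufun A F k b c n = Some n"
proof -
  let ?S = "{hcomp A k b z | z. is_problem A F k z \<and> hcomp A k c z \<le> n}"
  have bound: "?S \<subseteq> {..n}"
  proof
    fix s
    assume "s \<in> ?S"
    then obtain z' where "s = hcomp A k b z'" "is_problem A F k z'" "hcomp A k c z' \<le> n"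
      by blast
    then show "s \<in> {..n}"
      using assms(1)[of z'] by simp
  qed
  moreover have "n \<in> ?S"
    using assms(2-4) by (intro CollectI exI[of _ z]) simp
  moreover have "finite ?S"
    using bound finite_subset by blast
  ultimately have "Max ?S = n"
    by (intro Max_eqI) auto
  then show ?thesis
    using \<open>n \<in> ?S\<close> \<open>finite ?S\<close> unfolding Ufun_def by auto
qed

lemma Ufun_eq_None:
  assumes "\<And>m. \<exists>z. is_problem A F k z \<and> hcomp A k c z \<le> n \<and> m \<le> hcomp A k b z"
  shows "Ufun A F k b c n = None"
proof -
  let ?S = "{hcomp A k b z | z. is_problem A F k z \<and> hcomp A k c z \<le> n}"
  have "infinite ?S"
  proof
    assume "finite ?S"
    then obtain B where B: "\<forall>s \<in> ?S. s \<le> B"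
      using finite_nat_set_iff_bounded_le by blast
    obtain z where "is_problem A F k z" "hcomp A k c z \<le> n" "Suc B \<le> hcomp A k b z"
      using assms by blast
    then have "hcomp A k b z \<in> ?S"
      by (intro CollectI exI[of _ z]) simp
    with B \<open>Suc B \<le> hcomp A k b z\<close> show False
      by fastforce
  qed
  then show ?thesis
    unfolding Ufun_def by auto
qed

lemma f5_eq_1_iff: "f5 i x = 1 \<longleftrightarrow> x = i"
  by (simp add: f5_def)

lemma inj_f5: "inj f5"
proof (rule injI)
  fix i j
  assume "f5 i = f5 j"
  then have "f5 j i = 1"
    using f5_eq_1_iff by metis
  then show "i = j"
    unfolding f5_eq_1_iff by simp
qed

lemma length_ge_if_queries_f5:
  assumes "f5 ` {1..n} \<subseteq> fst ` set p"
  shows "n \<le> length p"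
proof -
  have "n = card (f5 ` {1..n})"
    using card_image[OF inj_on_subset[OF inj_f5 subset_UNIV]] by simp
  also have "\<dots> \<le> card (fst ` set p)"
    using assms by (simp add: card_mono)
  also have "\<dots> \<le> length p"
    using card_image_le card_length le_trans by blast
  finally show ?thesis .
qed

lemma F5_binary: "f \<in> F5 \<Longrightarrow> f x < 2"
  by (auto simp: F5_def f5_def)

lemma F5_vanishes_at_0: "f \<in> F5 \<Longrightarrow> f 0 = 0"
  by (auto simp: F5_def f5_def)

lemma F5_eq_1_unique:
  assumes "f \<in> F5" "f x = 1" "f y = 1"
  shows "x = y"
proof -
  obtain i where "f = f5 i"
    using assms(1) by (auto simp: F5_def)
  then show ?thesis
    using assms(2,3) f5_eq_1_iff by metis
qed

lemma F5_consistency_from_0: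
  assumes "set fs \<subseteq> F5" "\<forall>(f, d) \<in> set p. f \<in> set fs \<longrightarrow> f 0 = d"
    and "\<And>f. f \<in> fst ` set p \<Longrightarrow> f \<in> set fs \<Longrightarrow> f x = 0"
  shows "\<forall>(f, d) \<in> set p. f \<in> set fs \<longrightarrow> f x = d"
  using assms F5_vanishes_at_0 by fastforce

lemma U5_decision_nonempty:
  assumes "is_problem UNIV F5 2 (nu, fs)"
  shows "nu (map (\<lambda>f. f x) fs) \<noteq> {}"
proof -
  have "set (map (\<lambda>f. f x) fs) \<subseteq> {..<2}"
    using assms F5_binary by (auto simp: is_problem_def)
  then show ?thesis
    using assms by (simp add: is_problem_def)
qed

lemma U5_decision_list_dt:
  assumes P: "is_problem UNIV F5 2 (nu, fs)" and Q: "set Q \<subseteq> set fs"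
    and t: "\<And>x. \<forall>q \<in> set Q. q x = 0 \<Longrightarrow> t \<in> nu (map (\<lambda>f. f x) fs)"
  obtains G where "dt UNIV 2 (nu, fs) G" "depth G \<le> length Q"
proof -
  have F: "set fs \<subseteq> F5"
    using is_problem_attributes[OF P] .
  have "\<exists>l. \<forall>x. q x = 1 \<longrightarrow> l \<in> nu (map (\<lambda>f. f x) fs)" if "q \<in> set Q" for q
  proof (cases "\<exists>x. q x = 1")
    case True
    then obtain x where "q x = 1" ..
    moreover have "q \<in> F5"
      using that Q F by blast
    ultimately have "\<forall>y. q y = 1 \<longrightarrow> y = x"
      using F5_eq_1_unique by blast
    moreover obtain l where "l \<in> nu (map (\<lambda>f. f x) fs)"
      using U5_decision_nonempty[OF P] by blast
    ultimately show ?thesis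
      by auto
  qed simp
  then obtain lab where lab: "\<forall>q \<in> set Q. \<forall>x. q x = 1 \<longrightarrow> lab q \<in> nu (map (\<lambda>f. f x) fs)"
    using bchoice[of "set Q" "\<lambda>q l. \<forall>x. q x = 1 \<longrightarrow> l \<in> nu (map (\<lambda>f. f x) fs)"] by blast
  have "dt UNIV 2 (nu, fs) [decision_list lab Q t]"
  proof (rule dt_decision_list[OF order_refl Q])
    show "q x < 2" if "q \<in> set Q" for q x
      using that Q F F5_binary by blast
  qed (use lab t in auto)
  then show thesis
    using that depth_decision_list by blast
qed

lemma U5_dt_exists:
  assumes P: "is_problem UNIV F5 2 (nu, fs)"
  obtains G where "dt UNIV 2 (nu, fs) G" "depth G \<le> length fs"
proof -
  obtain t where t: "t \<in> nu (map (\<lambda>f. f 0) fs)"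
    using U5_decision_nonempty[OF P] by blast
  have F: "set fs \<subseteq> F5"
    using is_problem_attributes[OF P] .
  have zero: "\<forall>q \<in> set fs. q 0 = 0"
    using F F5_vanishes_at_0 by blast
  have t_ok: "t \<in> nu (map (\<lambda>f. f x) fs)" if "\<forall>q \<in> set fs. q x = 0" for x
  proof -
    have "map (\<lambda>f. f x) fs = map (\<lambda>f. f 0) fs"
      using that zero by auto
    then show ?thesis
      using t by (simp only:)
  qed
  show thesis
    by (rule U5_decision_list_dt[of nu fs fs t, OF P order_refl t_ok that])
qed

lemma U5_hcomp_CD_le_length:
  "is_problem UNIV F5 2 (nu, fs) \<Longrightarrow> hcomp UNIV 2 CD (nu, fs) \<le> length fs"
  by (meson U5_dt_exists hcomp_CD_le_depth le_trans)

lemma U5_hcomp_CD_eq_CA: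
  assumes P: "is_problem UNIV F5 2 (nu, fs)"
  shows "hcomp UNIV 2 CD (nu, fs) = hcomp UNIV 2 CA (nu, fs)"
proof (rule antisym)
  have F: "set fs \<subseteq> F5"
    using is_problem_attributes[OF P] .
  obtain G0 where G0: "dt UNIV 2 (nu, fs) G0"
    using U5_dt_exists[OF P] by blast
  then have "ndt UNIV 2 (nu, fs) G0"
    by (simp add: dt_def)
  then obtain G where G: "ndt UNIV 2 (nu, fs) G" "depth G = hcomp UNIV 2 CA (nu, fs)"
    by (rule ndt_optimal_exists)
  obtain p t where path: "(p, t) \<in> paths G"
    and zero: "\<forall>(f, d) \<in> set p. f \<in> set fs \<longrightarrow> f 0 = d"
    and label: "\<And>y. y \<in> UNIV \<Longrightarrow> \<forall>(f, d) \<in> set p. f \<in> set fs \<longrightarrow> f y = d \<Longrightarrow>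
      t \<in> nu (map (\<lambda>f. f y) fs)"
    using ndt_path_through_row[OF G(1) UNIV_I[of 0]] by blast
  define Q where "Q = filter (\<lambda>f. f \<in> set fs) (map fst p)"
  have Q_sub: "set Q \<subseteq> set fs"
    by (auto simp: Q_def)
  have t_ok: "t \<in> nu (map (\<lambda>f. f x) fs)" if "\<forall>q \<in> set Q. q x = 0" for x
    using that by (intro label UNIV_I F5_consistency_from_0[OF F zero]) (force simp: Q_def)
  obtain G' where G': "dt UNIV 2 (nu, fs) G'" "depth G' \<le> length Q"
    by (rule U5_decision_list_dt[OF P Q_sub t_ok])
  have "hcomp UNIV 2 CD (nu, fs) \<le> length Q"
    using hcomp_CD_le_depth[OF G'(1)] G'(2) by simp
  also have "\<dots> \<le> length p"
    unfolding Q_def using length_filter_le[of _ "map fst p"] by simp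
  also have "\<dots> \<le> hcomp UNIV 2 CA (nu, fs)"
    using length_le_depth[OF path] G(2) by simp
  finally show "hcomp UNIV 2 CD (nu, fs) \<le> hcomp UNIV 2 CA (nu, fs)" .
  show "hcomp UNIV 2 CA (nu, fs) \<le> hcomp UNIV 2 CD (nu, fs)"
    using hcomp_CA_le_CD[OF G0] .
qed

lemma U5_hcomp_mono:
  assumes "is_problem UNIV F5 2 z" "\<not> (b = CI \<and> c \<noteq> CI)"
  shows "hcomp UNIV 2 b z \<le> hcomp UNIV 2 c z"
proof (cases z)
  case (Pair nu fs)
  then show ?thesis
    using assms U5_hcomp_CD_eq_CA U5_hcomp_CD_le_length
    by (cases b; cases c) (auto simp: hcomp_def)
qed

definition membership_problem :: "nat \<Rightarrow> nat problem" where
  "membership_problem n = (\<lambda>d. {if 1 \<in> set d then 1 else 0}, map f5 [1..<Suc n])"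

definition constant_problem :: "nat \<Rightarrow> nat problem" where
  "constant_problem m = (\<lambda>_. {0}, replicate m (f5 1))"

lemma is_problem_membership_problem: "1 \<le> n \<Longrightarrow> is_problem UNIV F5 2 (membership_problem n)"
  by (auto simp: is_problem_def membership_problem_def F5_def)

lemma membership_problem_decides_membership:
  assumes "membership_problem n = (nu, fs)"
  shows "nu (map (\<lambda>f. f x) fs) = {if x \<in> {1..n} then 1 else 0}"
proof -
  have nu: "nu = (\<lambda>d. {if 1 \<in> set d then 1 else 0})" and fs: "fs = map f5 [1..<Suc n]"
    using assms by (auto simp: membership_problem_def)
  have "set (map (\<lambda>f. f x) fs) = (\<lambda>i. f5 i x) ` {1..n}"
    unfolding fs by (simp add: image_image atLeastLessThanSuc_atLeastAtMost del: upt_Suc)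
  then have "1 \<in> set (map (\<lambda>f. f x) fs) \<longleftrightarrow> (\<exists>i \<in> {1..n}. f5 i x = 1)"
    by (metis image_iff)
  also have "\<dots> \<longleftrightarrow> x \<in> {1..n}"
    unfolding f5_eq_1_iff by blast
  finally show ?thesis
    by (simp add: nu)
qed

lemma membership_problem_depth:
  assumes G: "ndt UNIV 2 (membership_problem n) G"
  shows "n \<le> depth G"
proof -
  obtain nu fs where z: "membership_problem n = (nu, fs)"
    by fastforce
  have "fs = map f5 [1..<Suc n]"
    using z by (auto simp: membership_problem_def)
  then have fs: "set fs = f5 ` {1..n}"
    by (simp add: atLeastLessThanSuc_atLeastAtMost del: upt_Suc)
  then have F: "set fs \<subseteq> F5"
    by (auto simp: F5_def)
  obtain p t where path: "(p, t) \<in> paths G"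
    and zero: "\<forall>(f, d) \<in> set p. f \<in> set fs \<longrightarrow> f 0 = d"
    and label: "\<And>y. y \<in> UNIV \<Longrightarrow> \<forall>(f, d) \<in> set p. f \<in> set fs \<longrightarrow> f y = d \<Longrightarrow>
      t \<in> nu (map (\<lambda>f. f y) fs)"
    using ndt_path_through_row[OF G[unfolded z] UNIV_I[of 0]] by blast
  have "t = 0"
    using label[OF UNIV_I zero] membership_problem_decides_membership[OF z] by simp
  have "f5 i \<in> fst ` set p" if i: "i \<in> {1..n}" for i
  proof (rule ccontr)
    assume missing: "f5 i \<notin> fst ` set p"
    have "f i = 0" if queried: "f \<in> fst ` set p" and "f \<in> set fs" for f
    proof -
      obtain j where j: "f = f5 j"
        using \<open>f \<in> set fs\<close> fs by blast
      with queried missing have "j \<noteq> i"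
        by blast
      with j show ?thesis
        by (simp add: f5_def)
    qed
    then have "\<forall>(f, d) \<in> set p. f \<in> set fs \<longrightarrow> f i = d"
      by (intro F5_consistency_from_0[OF F zero])
    then have "t \<in> nu (map (\<lambda>f. f i) fs)"
      by (rule label[OF UNIV_I])
    then have "t = 1"
      using i membership_problem_decides_membership[OF z] by simp
    with \<open>t = 0\<close> show False
      by simp
  qed
  then have "n \<le> length p"
    by (intro length_ge_if_queries_f5) blast
  also have "\<dots> \<le> depth G"
    using length_le_depth[OF path] .
  finally show ?thesis .
qed

lemma hcomp_membership_problem:
  assumes "1 \<le> n"
  shows "hcomp UNIV 2 b (membership_problem n) = n"
proof -
  obtain nu fs where z: "membership_problem n = (nu, fs)"
    by fastforce
  have P: "is_problem UNIV F5 2 (nu, fs)"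
    using is_problem_membership_problem[OF assms] z by simp
  have "length fs = n"
    using z by (auto simp: membership_problem_def)
  moreover obtain G where "ndt UNIV 2 (nu, fs) G" "depth G = hcomp UNIV 2 CA (nu, fs)"
    using U5_dt_exists[OF P] ndt_optimal_exists unfolding dt_def by metis
  then have "n \<le> hcomp UNIV 2 CA (nu, fs)"
    using membership_problem_depth z by metis
  ultimately show ?thesis
    using U5_hcomp_CD_eq_CA[OF P] U5_hcomp_CD_le_length[OF P] z
    by (cases b) (auto simp: hcomp_def)
qed

lemma is_problem_constant_problem: "1 \<le> m \<Longrightarrow> is_problem UNIV F5 2 (constant_problem m)"
  by (auto simp: is_problem_def constant_problem_def F5_def)

lemma hcomp_constant_problem:
  assumes "1 \<le> m"
  shows "hcomp UNIV 2 CI (constant_problem m) = m"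
    and "c \<noteq> CI \<Longrightarrow> hcomp UNIV 2 c (constant_problem m) = 0"
proof -
  show "hcomp UNIV 2 CI (constant_problem m) = m"
    by (simp add: hcomp_def constant_problem_def)
  have P: "is_problem UNIV F5 2 (\<lambda>_. {0}, replicate m (f5 1))"
    using is_problem_constant_problem[OF assms] by (simp add: constant_problem_def)
  obtain G where "dt UNIV 2 (\<lambda>_. {0}, replicate m (f5 1)) G" "depth G \<le> 0"
    using U5_decision_list_dt[OF P, of "[]" 0] by auto
  then have "hcomp UNIV 2 CD (constant_problem m) = 0"
    using hcomp_CD_le_depth unfolding constant_problem_def by fastforce
  moreover have "hcomp UNIV 2 CA (constant_problem m) = hcomp UNIV 2 CD (constant_problem m)"
    using U5_hcomp_CD_eq_CA[OF P] unfolding constant_problem_def by simp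
  ultimately show "c \<noteq> CI \<Longrightarrow> hcomp UNIV 2 c (constant_problem m) = 0"
    by (cases c) auto
qed

lemma Ufun_U5_CI_eq_None:
  assumes "c \<noteq> CI"
  shows "Ufun UNIV F5 2 CI c = (\<lambda>_. None)"
proof (rule ext, rule Ufun_eq_None)
  fix n m
  have "is_problem UNIV F5 2 (constant_problem (Suc m))"
    "hcomp UNIV 2 c (constant_problem (Suc m)) = 0"
    "hcomp UNIV 2 CI (constant_problem (Suc m)) = Suc m"
    using is_problem_constant_problem[of "Suc m"] hcomp_constant_problem[of "Suc m"] assms
    by simp_all
  then show "\<exists>z. is_problem UNIV F5 2 z \<and> hcomp UNIV 2 c z \<le> n \<and> m \<le> hcomp UNIV 2 CI z"
    by (intro exI[of _ "constant_problem (Suc m)"]) simp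
qed

lemma Ufun_U5_eq_Some:
  assumes "\<not> (b = CI \<and> c \<noteq> CI)" "1 \<le> n"
  shows "Ufun UNIV F5 2 b c n = Some n"
  by (rule Ufun_eq_Some[OF U5_hcomp_mono[OF _ assms(1)] is_problem_membership_problem[OF assms(2)]
        hcomp_membership_problem[OF assms(2)] hcomp_membership_problem[OF assms(2)]])

theorem lemma13:
  shows "typ_u (UNIV :: nat set) F5 2 = t5"
proof (intro ext)
  fix b c
  show "typ_u (UNIV :: nat set) F5 2 b c = t5 b c"
  proof (cases "b = CI \<and> c \<noteq> CI")
    case True
    then show ?thesis
      by (cases c) (simp_all add: typ_u_def t5_def Ufun_U5_CI_eq_None typ_of_const_None)
  next
    case False
    then have "{1..} \<subseteq> {n. Ufun UNIV F5 2 b c n = Some n}"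
      using Ufun_U5_eq_Some by auto
    then have "typ_u UNIV F5 2 b c = TGamma"
      unfolding typ_u_def by (intro typ_of_eq_TGamma infinite_super[OF _ infinite_Ici])
    then show ?thesis
      using False by (cases b; cases c) (simp_all add: t5_def)
  qed
qed

end
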